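(* Let $(U_n)_{n\ge1}$ and $(V_n)_{n\ge1}$ be sequences in $\mathcal{D}$ converging in $\tau_{\mathcal{D}}$ to $U\in\mathcal{D}$ and $V\in\mathcal{D}$ respectively, and suppose $U_n\ge_sV_n$ for all $n$. Then $U\ge_sV$.
   Context: $\mathcal{D}$ is the set of non-increasing càdlàg functions $U:\mathbb{R}\to[0,1]$ with $\lim_{x\to-\infty}U(x)=1$ and $\lim_{x\to\infty}U(x)=0$. The topology $\tau_{\mathcal{D}}$: $U_n\to U$ iff $U_n(x)\to U(x)$ at every continuity point $x$ of $U$ (this is the image of the weak topology on probability measures under $\mu\mapsto(x\mapsto\mu((x,\infty)))$). For $U,V\in\mathcal{D}$, $U\ge_sV$ ("$U$ is more stretched than $V$") means: for every $c\in\mathbb{R}$ and $x_1\le x_2$, $U(x_1)>V(x_1+c)$ implies $U(x_2)\ge V(x_2+c)$. *)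

theory Defs
  imports "HOL-Analysis.Analysis"
begin

definition in_D :: "(real \<Rightarrow> real) \<Rightarrow> bool" where
  "in_D U \<longleftrightarrow>
     (\<forall>x y. x \<le> y \<longrightarrow> U y \<le> U x) \<and>
     (\<forall>x. U x \<in> {0..1}) \<and>
     (\<forall>x. continuous (at_right x) U) \<and>
     (\<forall>x. \<exists>l. (U \<longlongrightarrow> l) (at_left x)) \<and>
     (U \<longlongrightarrow> 1) at_bot \<and>
     (U \<longlongrightarrow> 0) at_top"

definition tauD_converges :: "(nat \<Rightarrow> real \<Rightarrow> real) \<Rightarrow> (real \<Rightarrow> real) \<Rightarrow> bool" where
  "tauD_converges Us U \<longleftrightarrow> (\<forall>x. isCont U x \<longrightarrow> (\<lambda>n. Us n x) \<longlonglongrightarrow> U x)"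

definition more_stretched :: "(real \<Rightarrow> real) \<Rightarrow> (real \<Rightarrow> real) \<Rightarrow> bool" where
  "more_stretched U V \<longleftrightarrow>
     (\<forall>c x1 x2. x1 \<le> x2 \<longrightarrow> U x1 > V (x1 + c) \<longrightarrow> U x2 \<ge> V (x2 + c))"

end

theory Submission
  imports Defs
begin

text \<open>Suppose V (x1 + c) < U x1 and U x2 < V (x2 + c) with x1 \<le> x2. Both
  inequalities are strict, so by right-continuity of U and monotonicity one may move
  x1 and x2 slightly to the right and decrease c slightly so that all four points avoid
  the countably many discontinuities of U and V. At continuity points convergence in
  tau_D is pointwise, so the two strict inequalities pass to U_n and V_n for large n,
  contradicting U_n \<ge>_s V_n.\<close>

lemma in_D_antimono: "in_D U \<Longrightarrow> antimono U"
  by (auto simp: in_D_def antimono_def)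

lemma antimono_ctble_discont:
  fixes f :: "real \<Rightarrow> real"
  assumes "antimono f"
  shows "countable {a. \<not> isCont f a}"
proof -
  have "countable {a. \<not> isCont (\<lambda>x. - f x) a}"
    by (rule mono_ctble_discont) (use assms in \<open>simp add: mono_def antimono_def\<close>)
  moreover have "isCont (\<lambda>x. - f x) a \<longleftrightarrow> isCont f a" for a
    using isCont_minus[where f="\<lambda>x. - f x" and a=a] isCont_minus[where f=f and a=a] by auto
  ultimately show ?thesis
    by simp
qed

lemma exists_between_notin_countable:
  fixes a b :: real
  assumes "a < b" "countable A"
  obtains y where "a < y" "y < b" "y \<notin> A"
  using open_minus_countable[OF assms(2), of "{a<..<b}"] assms(1) by auto

lemma perturb_shifted_below:
  fixes U V :: "real \<Rightarrow> real"
  assumes "continuous (at_right x) U" "antimono V" "V (x + c) < U x"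
    and "d > 0" "countable A" "countable B"
  obtains y c' where "x < y" "y < x + d" "c' < c" "y \<notin> A" "y + c' \<notin> B"
    "V (y + c') < U y"
proof -
  have "\<forall>\<^sub>F y in at_right x. V (x + c) < U y"
    using assms(1,3) by (simp add: continuous_within order_tendstoD(1))
  then obtain b where "b > x" and b: "\<And>y. x < y \<Longrightarrow> y < b \<Longrightarrow> V (x + c) < U y"
    unfolding eventually_at_right_field by blast
  obtain y where y: "x < y" "y < min b (x + d)" "y \<notin> A"
    using exists_between_notin_countable[OF _ assms(5), of x "min b (x + d)"] \<open>b > x\<close> assms(4)
    by auto
  obtain z where z: "x + c < z" "z < y + c" "z \<notin> B"
    using exists_between_notin_countable[OF _ assms(6), of "x + c" "y + c"] y(1) by auto
  have "V z < U y"
    using antimonoD[OF assms(2), of "x + c" z] b[of y] y z(1) by simp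
  then show thesis
    using that[of y "z - y"] y z by simp
qed

lemma perturb_shifted_above:
  fixes U V :: "real \<Rightarrow> real"
  assumes "antimono U" "antimono V" "U x < V (x + c)"
    and "c' < c" "countable A" "countable B"
  obtains y where "x < y" "y \<notin> A" "y + c' \<notin> B" "U y < V (y + c')"
proof -
  have "countable (A \<union> (\<lambda>b. b - c') ` B)"
    using assms(5,6) by simp
  moreover have "x < x + (c - c')"
    using assms(4) by simp
  ultimately obtain y where y: "x < y" "y < x + (c - c')" "y \<notin> A \<union> (\<lambda>b. b - c') ` B"
    using exists_between_notin_countable by blast
  have "y + c' \<notin> B"
    using y(3) by (metis UnCI add_diff_cancel_right' image_eqI)
  moreover have "U y < V (y + c')"
    using antimonoD[OF assms(1), of x y] antimonoD[OF assms(2), of "y + c'" "x + c"] y assms(3)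
    by simp
  ultimately show thesis
    using that y by simp
qed

lemma not_more_stretched_avoiding_countable:
  fixes U V :: "real \<Rightarrow> real"
  assumes "x1 \<le> x2" "V (x1 + c) < U x1" "U x2 < V (x2 + c)"
    and "continuous (at_right x1) U" "antimono U" "antimono V"
    and "countable A" "countable B"
  obtains y1 y2 c' where "y1 \<le> y2" "y1 \<notin> A" "y2 \<notin> A" "y1 + c' \<notin> B" "y2 + c' \<notin> B"
    "V (y1 + c') < U y1" "U y2 < V (y2 + c')"
proof -
  have "x1 < x2"
    using assms(1-3) by (metis order.strict_trans order_less_irrefl order_le_less)
  obtain y1 c' where y1: "x1 < y1" "y1 < x1 + (x2 - x1)" "c' < c" "y1 \<notin> A"
    "y1 + c' \<notin> B" "V (y1 + c') < U y1"
    by (rule perturb_shifted_below[OF assms(4,6,2) _ assms(7,8), of "x2 - x1"])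
      (use \<open>x1 < x2\<close> in simp)
  obtain y2 where "x2 < y2" "y2 \<notin> A" "y2 + c' \<notin> B" "U y2 < V (y2 + c')"
    using perturb_shifted_above[OF assms(5,6,3) y1(3) assms(7,8)] by blast
  then show thesis
    using that[of y1 y2 c'] y1 by simp
qed

lemma more_stretched_limit_at_points:
  assumes "\<forall>\<^sub>F n in sequentially. more_stretched (Us n) (Vs n)"
    and "(\<lambda>n. Us n y1) \<longlonglongrightarrow> U y1" "(\<lambda>n. Us n y2) \<longlonglongrightarrow> U y2"
    and "(\<lambda>n. Vs n (y1 + c)) \<longlonglongrightarrow> V (y1 + c)" "(\<lambda>n. Vs n (y2 + c)) \<longlonglongrightarrow> V (y2 + c)"
    and "y1 \<le> y2" "V (y1 + c) < U y1"
  shows "V (y2 + c) \<le> U y2"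
proof (rule ccontr)
  assume "\<not> V (y2 + c) \<le> U y2"
  then have "\<forall>\<^sub>F n in sequentially. Us n y2 - Vs n (y2 + c) < 0"
    using order_tendstoD(2)[OF tendsto_diff[OF assms(3,5)], of 0] by simp
  moreover have "\<forall>\<^sub>F n in sequentially. 0 < Us n y1 - Vs n (y1 + c)"
    using order_tendstoD(1)[OF tendsto_diff[OF assms(2,4)], of 0] assms(7) by simp
  ultimately have "\<forall>\<^sub>F n in sequentially. False"
    using assms(1) by eventually_elim (use assms(6) in \<open>force simp: more_stretched_def\<close>)
  then show False
    by simp
qed

theorem lemma2p1:
  fixes Us Vs :: "nat \<Rightarrow> real \<Rightarrow> real" and U V :: "real \<Rightarrow> real"
  assumes "\<And>n. n \<ge> 1 \<Longrightarrow> in_D (Us n)"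
      and "\<And>n. n \<ge> 1 \<Longrightarrow> in_D (Vs n)"
      and "in_D U" and "in_D V"
      and "tauD_converges Us U" and "tauD_converges Vs V"
      and "\<And>n. n \<ge> 1 \<Longrightarrow> more_stretched (Us n) (Vs n)"
  shows "more_stretched U V"
  unfolding more_stretched_def
proof (intro allI impI, rule ccontr)
  fix c x1 x2 :: real
  assume x12: "x1 \<le> x2" and below: "V (x1 + c) < U x1" and "\<not> V (x2 + c) \<le> U x2"
  then have above: "U x2 < V (x2 + c)"
    by simp
  have right_cont: "continuous (at_right x1) U"
    using assms(3) by (simp add: in_D_def)
  have U_antimono: "antimono U" and V_antimono: "antimono V"
    using in_D_antimono assms(3,4) by blast+
  obtain y1 y2 c' where y: "y1 \<le> y2"
    "y1 \<notin> {a. \<not> isCont U a}" "y2 \<notin> {a. \<not> isCont U a}"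
    "y1 + c' \<notin> {a. \<not> isCont V a}" "y2 + c' \<notin> {a. \<not> isCont V a}"
    "V (y1 + c') < U y1" "U y2 < V (y2 + c')"
    by (rule not_more_stretched_avoiding_countable[OF x12 below above right_cont
        U_antimono V_antimono antimono_ctble_discont[OF U_antimono]
        antimono_ctble_discont[OF V_antimono]])
  have "\<forall>\<^sub>F n in sequentially. more_stretched (Us n) (Vs n)"
    unfolding eventually_sequentially using assms(7) by blast
  moreover have "\<And>y. isCont U y \<Longrightarrow> (\<lambda>n. Us n y) \<longlonglongrightarrow> U y"
    and "\<And>y. isCont V y \<Longrightarrow> (\<lambda>n. Vs n y) \<longlonglongrightarrow> V y"
    using assms(5,6) by (simp_all add: tauD_converges_def)
  ultimately have "V (y2 + c') \<le> U y2"
    using more_stretched_limit_at_points[of Us Vs y1 U y2 c' V] y by simp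
  with y(7) show False
    by simp
qed

end
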